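(* In the standing setup, with the convention $x_\infty:=x_{\infty+1}:=0$, we have for all $1\le m<n\le\infty$: $$0\le\big\langle x_{m+1}-x_{n+1},\,(x_m-x_{m+1})-(x_n-x_{n+1})\big\rangle.$$
   Context: Standing setup. $X$ is a real Hilbert space. $u\colon[0,\infty)\to X$ satisfies $\langle u(s),u(t)\rangle=\exp(-(s-t)^2)$ for all $s,t\ge0$. $(d_n)_{n\ge1}$ satisfies: $d_n>0$, $\sum_k d_k^2<\infty$, $t_n:=\sum_{k=1}^{n-1}d_k\to+\infty$, $d_1\le1/8$, $d_{n+1}\le d_n/(1+64d_n^2)$ for all $n$. $\rho_1:=1$, $\rho_{n+1}:=\rho_n\exp(-d_n^2)$, $x_n:=\rho_nu(t_n)$. *)

theory Defs
  imports "HOL-Analysis.Analysis" "HOL-Library.Extended_Nat"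
begin

text \<open>Sequences are indexed from 1; index 0 is a dummy value.\<close>

definition tseq :: "(nat \<Rightarrow> real) \<Rightarrow> nat \<Rightarrow> real" where
  "tseq d n = (\<Sum>k\<in>{1..<n}. d k)"

fun rho :: "(nat \<Rightarrow> real) \<Rightarrow> nat \<Rightarrow> real" where
  "rho d 0 = 1"
| "rho d (Suc 0) = 1"
| "rho d (Suc (Suc n)) = rho d (Suc n) * exp (- (d (Suc n))\<^sup>2)"

text \<open>x_n = rho_n u(t_n) for finite n, and x_\<infinity> = 0 (note \<infinity>+1 = \<infinity> in enat).\<close>
definition xseq :: "(real \<Rightarrow> 'a::real_vector) \<Rightarrow> (nat \<Rightarrow> real) \<Rightarrow> enat \<Rightarrow> 'a" where
  "xseq u d m = (case m of enat n \<Rightarrow> rho d n *\<^sub>R u (tseq d n) | \<infinity> \<Rightarrow> 0)"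

end

(*
  Write a = x_m, b = x_(m+1), c = x_n, e = x_(n+1).  The factor exp (- d_k^2) relating
  rho_(k+1) to rho_k is the Gaussian kernel at distance t_(k+1) - t_k = d_k, so
  <x_(k+1), x_k> = |x_(k+1)|^2; hence the inner product in question collapses to
  2 <b, e> - <b, c> - <e, a>, which vanishes for n = \<infinity>.  For finite n the three terms are
  explicit Gaussians, and after division by <b, c> the claim reads
  1 + exp (- 2qy - 2py) \<le> 2 exp (- 2qy) with p = d_m, q = d_n, y = t_(n+1) - t_(m+1).
  This elementary inequality holds as soon as q (1 + 64 p y) \<le> p, which is what the
  recursion for d provides: it says 1/d_(k+1) \<ge> 1/d_k + 64 d_k.
*)

theory Submission
  imports Defs
begin

lemma one_plus_exp_le_two_exp:
  fixes a b :: real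
  assumes a: "0 \<le> a" and b: "0 \<le> b" and ab: "a * (1 + 32 * b) \<le> b"
  shows "1 + exp (- (a + b)) \<le> 2 * exp (- a)"
proof -
  have "(1 + 31 * b) / (1 + 32 * b) \<le> 1 - a"
    using ab b by (simp add: field_simps)
  also have "1 - a \<le> exp (- a)"
    using exp_ge_add_one_self[of "- a"] by simp
  finally have exp_a: "(1 + 31 * b) / (1 + 32 * b) \<le> exp (- a)" .
  have "exp (- b) \<le> 1 / (1 + b)"
    using exp_ge_add_one_self[of b] b by (simp add: exp_minus field_simps)
  then have exp_b: "(1 + 2 * b) / (1 + b) \<le> 2 - exp (- b)"
    using b by (simp add: field_simps)
  have "(1 + 32 * b) * (1 + b) \<le> (1 + 31 * b) * (1 + 2 * b)"
    using b by (simp add: algebra_simps)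
  then have "1 \<le> (1 + 31 * b) / (1 + 32 * b) * ((1 + 2 * b) / (1 + b))"
    using b by (simp add: le_divide_eq_1)
  also have "\<dots> \<le> exp (- a) * (2 - exp (- b))"
    using exp_a exp_b b by (intro mult_mono) auto
  also have "\<dots> = 2 * exp (- a) - exp (- (a + b))"
    by (simp add: algebra_simps exp_add[symmetric])
  finally show ?thesis by simp
qed

lemma gaussian_cross_terms:
  fixes p q D :: real
  assumes p: "0 \<le> p" and q: "0 \<le> q" and D: "0 \<le> D"
    and pq: "q * (1 + 64 * p * (D + q)) \<le> p"
  shows "exp (- D\<^sup>2) + exp (p\<^sup>2 - q\<^sup>2 - (D + q + p)\<^sup>2) \<le> 2 * exp (- q\<^sup>2 - (D + q)\<^sup>2)"
proof -
  define y where "y = D + q"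
  have y: "0 \<le> y" using D q by (simp add: y_def)
  have "(2 * q * y) * (1 + 32 * (2 * p * y)) \<le> 2 * p * y"
    using mult_right_mono[OF pq, of "2 * y"] y by (simp add: y_def algebra_simps)
  then have "1 + exp (- (2 * q * y + 2 * p * y)) \<le> 2 * exp (- (2 * q * y))"
    using p q y by (intro one_plus_exp_le_two_exp) auto
  then have "exp (- D\<^sup>2) * (1 + exp (- (2 * q * y + 2 * p * y)))
      \<le> exp (- D\<^sup>2) * (2 * exp (- (2 * q * y)))"
    by simp
  moreover have "exp (- D\<^sup>2) * exp (- (2 * q * y + 2 * p * y)) = exp (p\<^sup>2 - q\<^sup>2 - (D + q + p)\<^sup>2)"
    and "exp (- D\<^sup>2) * exp (- (2 * q * y)) = exp (- q\<^sup>2 - (D + q)\<^sup>2)"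
    by (simp_all add: exp_add[symmetric] y_def power2_eq_square algebra_simps)
  ultimately show ?thesis
    by (simp add: distrib_left)
qed

lemma inner_diff_consecutive:
  fixes a b c e :: "'a::real_inner"
  assumes "inner b a = inner b b" and "inner e c = inner e e"
  shows "inner (b - e) ((a - b) - (c - e)) = 2 * inner b e - inner b c - inner e a"
  using assms by (simp add: inner_diff_left inner_diff_right inner_commute)

lemma tseq_Suc: "1 \<le> k \<Longrightarrow> tseq d (Suc k) = tseq d k + d k"
  unfolding tseq_def by (simp add: sum.atLeastLessThan_Suc)

lemma rho_Suc: "1 \<le> k \<Longrightarrow> rho d (Suc k) = rho d k * exp (- (d k)\<^sup>2)"
  by (cases k) auto

lemma rho_pos: "0 < rho d k"
  by (induction d k rule: rho.induct) auto

lemma tseq_nonneg: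
  assumes "\<And>k. k \<ge> 1 \<Longrightarrow> d k > 0"
  shows "0 \<le> tseq d k"
  unfolding tseq_def using assms by (intro sum_nonneg) (auto simp: less_imp_le)

lemma tseq_mono:
  assumes "\<And>k. k \<ge> 1 \<Longrightarrow> d k > 0" and "i \<le> j"
  shows "tseq d i \<le> tseq d j"
  unfolding tseq_def using assms by (intro sum_mono2) (auto simp: less_imp_le)

lemma inverse_d_growth:
  assumes d_pos: "\<And>k. k \<ge> 1 \<Longrightarrow> d k > 0"
    and d_rec: "\<And>k. k \<ge> 1 \<Longrightarrow> d (k + 1) \<le> d k / (1 + 64 * (d k)\<^sup>2)"
    and i: "1 \<le> i" and ij: "i \<le> j"
  shows "1 / d i + 64 * (tseq d j - tseq d i) \<le> 1 / d j"
  using ij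
proof (induction j rule: dec_induct)
  case base
  then show ?case by simp
next
  case (step j)
  have j: "1 \<le> j" using i step.hyps by simp
  have "d (Suc j) * (1 + 64 * (d j)\<^sup>2) \<le> d j"
    using d_rec[OF j] by (simp add: pos_le_divide_eq add_pos_nonneg)
  then have "1 / d j + 64 * d j \<le> 1 / d (Suc j)"
    using d_pos[OF j] d_pos[of "Suc j"] j
    by (simp add: field_simps power2_eq_square)
  then show ?case
    using step.IH tseq_Suc[OF j, of d] by simp
qed

lemma d_decay_bound:
  assumes d_pos: "\<And>k. k \<ge> 1 \<Longrightarrow> d k > 0"
    and d_rec: "\<And>k. k \<ge> 1 \<Longrightarrow> d (k + 1) \<le> d k / (1 + 64 * (d k)\<^sup>2)"
    and i: "1 \<le> i" and ij: "i < j"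
  shows "d j * (1 + 64 * d i * (tseq d (Suc j) - tseq d (Suc i))) \<le> d i"
proof -
  have p: "0 < d i" and q: "0 < d j" using d_pos i ij by auto
  have growth: "1 / d i + 64 * (tseq d j - tseq d i) \<le> 1 / d j"
    using inverse_d_growth[of d, OF d_pos d_rec i] ij by simp
  have "tseq d (Suc i) \<le> tseq d j"
    using tseq_mono[OF d_pos] ij by simp
  then have "1 / d i \<le> 1 / d j"
    using growth tseq_Suc[OF i, of d] p by simp
  then have "d j \<le> d i"
    using p q by (simp add: field_simps)
  then have "1 / d i + 64 * (tseq d (Suc j) - tseq d (Suc i)) \<le> 1 / d j"
    using growth tseq_Suc[OF i, of d] tseq_Suc[of j d] ij i by simp
  then show ?thesis
    using p q by (simp add: field_simps)
qed

lemma xseq_enat: "xseq u d (enat k) = rho d k *\<^sub>R u (tseq d k)"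
  by (simp add: xseq_def)

lemma inner_xseq:
  assumes u_inner: "\<And>s t. s \<ge> 0 \<Longrightarrow> t \<ge> 0 \<Longrightarrow> inner (u s) (u t) = exp (- (s - t)\<^sup>2)"
    and d_pos: "\<And>k. k \<ge> 1 \<Longrightarrow> d k > 0"
  shows "inner (xseq u d (enat k)) (xseq u d (enat l))
    = rho d k * rho d l * exp (- (tseq d k - tseq d l)\<^sup>2)"
  using u_inner tseq_nonneg[OF d_pos] by (simp add: xseq_enat)

lemma inner_xseq_Suc:
  assumes u_inner: "\<And>s t. s \<ge> 0 \<Longrightarrow> t \<ge> 0 \<Longrightarrow> inner (u s) (u t) = exp (- (s - t)\<^sup>2)"
    and d_pos: "\<And>k. k \<ge> 1 \<Longrightarrow> d k > 0"
    and k: "1 \<le> k"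
  shows "inner (xseq u d (enat (Suc k))) (xseq u d (enat k))
    = inner (xseq u d (enat (Suc k))) (xseq u d (enat (Suc k)))"
  using rho_Suc[OF k, of d] tseq_Suc[OF k, of d]
  by (simp add: inner_xseq[of u d, OF u_inner d_pos] power2_eq_square exp_add[symmetric])

lemma inner_xseq_cross:
  assumes u_inner: "\<And>s t. s \<ge> 0 \<Longrightarrow> t \<ge> 0 \<Longrightarrow> inner (u s) (u t) = exp (- (s - t)\<^sup>2)"
    and d_pos: "\<And>k. k \<ge> 1 \<Longrightarrow> d k > 0"
    and d_rec: "\<And>k. k \<ge> 1 \<Longrightarrow> d (k + 1) \<le> d k / (1 + 64 * (d k)\<^sup>2)"
    and i: "1 \<le> i" and ij: "i < j"
  shows "inner (xseq u d (enat (Suc i))) (xseq u d (enat j))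
      + inner (xseq u d (enat (Suc j))) (xseq u d (enat i))
    \<le> 2 * inner (xseq u d (enat (Suc i))) (xseq u d (enat (Suc j)))"
proof -
  define p where "p = d i"
  define q where "q = d j"
  define D where "D = tseq d j - tseq d (Suc i)"
  define R where "R = rho d (Suc i) * rho d j"
  have j: "1 \<le> j" using i ij by simp
  have p: "0 < p" and q: "0 < q" using d_pos i j by (auto simp: p_def q_def)
  have D: "0 \<le> D" using tseq_mono[of d "Suc i" j, OF d_pos] ij by (simp add: D_def)
  have R: "0 < R" using rho_pos by (simp add: R_def)
  have inner_x: "inner (xseq u d (enat k)) (xseq u d (enat l))
      = rho d k * rho d l * exp (- (tseq d k - tseq d l)\<^sup>2)" for k l
    using inner_xseq[of u d, OF u_inner d_pos] .
  have rho_i: "rho d i = rho d (Suc i) * exp (p\<^sup>2)"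
    using rho_Suc[OF i, of d] by (simp add: p_def exp_minus)
  have t_i: "tseq d i = tseq d (Suc i) - p" and t_Suc_j: "tseq d (Suc j) = tseq d (Suc i) + D + q"
    using tseq_Suc[OF i, of d] tseq_Suc[OF j, of d] by (simp_all add: p_def q_def D_def)
  have "exp (- D\<^sup>2) + exp (p\<^sup>2 - q\<^sup>2 - (D + q + p)\<^sup>2) \<le> 2 * exp (- q\<^sup>2 - (D + q)\<^sup>2)"
    using gaussian_cross_terms p q D d_decay_bound[of d, OF d_pos d_rec i ij] t_Suc_j
    by (simp add: p_def q_def)
  then have "R * exp (- D\<^sup>2) + R * exp (p\<^sup>2 - q\<^sup>2 - (D + q + p)\<^sup>2)
      \<le> 2 * (R * exp (- q\<^sup>2 - (D + q)\<^sup>2))"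
    using R by (simp add: distrib_left[symmetric])
  moreover have "inner (xseq u d (enat (Suc i))) (xseq u d (enat j)) = R * exp (- D\<^sup>2)"
    by (simp add: inner_x R_def D_def power2_commute)
  moreover have "inner (xseq u d (enat (Suc j))) (xseq u d (enat i))
      = R * exp (p\<^sup>2 - q\<^sup>2 - (D + q + p)\<^sup>2)"
    unfolding inner_x rho_Suc[OF j] rho_i t_i t_Suc_j
    by (simp add: R_def q_def mult_ac flip: exp_add) (simp add: power2_eq_square algebra_simps)
  moreover have "inner (xseq u d (enat (Suc i))) (xseq u d (enat (Suc j)))
      = R * exp (- q\<^sup>2 - (D + q)\<^sup>2)"
    unfolding inner_x rho_Suc[OF j] t_Suc_j
    by (simp add: R_def q_def mult_ac flip: exp_add) (simp add: power2_eq_square algebra_simps)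
  ultimately show ?thesis by simp
qed

theorem lemma6p3:
  fixes u :: "real \<Rightarrow> 'a::{real_inner, complete_space}"
    and d :: "nat \<Rightarrow> real"
    and m n :: enat
  assumes u_inner: "\<And>s t. s \<ge> 0 \<Longrightarrow> t \<ge> 0 \<Longrightarrow> inner (u s) (u t) = exp (- (s - t)\<^sup>2)"
    and d_pos: "\<And>k. k \<ge> 1 \<Longrightarrow> d k > 0"
    and d_sq_summable: "summable (\<lambda>k. (d k)\<^sup>2)"
    and t_infty: "filterlim (tseq d) at_top sequentially"
    and d1: "d 1 \<le> 1/8"
    and d_rec: "\<And>k. k \<ge> 1 \<Longrightarrow> d (k + 1) \<le> d k / (1 + 64 * (d k)\<^sup>2)"
    and mn: "1 \<le> m" "m < n"
  shows "0 \<le> inner (xseq u d (m + 1) - xseq u d (n + 1))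
                    ((xseq u d m - xseq u d (m + 1)) - (xseq u d n - xseq u d (n + 1)))"
proof -
  obtain i where m: "m = enat i" and i: "1 \<le> i"
    using mn by (cases m) (auto simp: one_enat_def)
  have step_m: "inner (xseq u d (m + 1)) (xseq u d m) = inner (xseq u d (m + 1)) (xseq u d (m + 1))"
    using inner_xseq_Suc[of u d, OF u_inner d_pos i] by (simp add: m one_enat_def)
  show ?thesis
  proof (cases n)
    case infinity
    then show ?thesis
      using inner_diff_consecutive[OF step_m, of 0 0] by (simp add: xseq_def)
  next
    case (enat j)
    have ij: "i < j" using mn m enat by simp
    have step_n: "inner (xseq u d (n + 1)) (xseq u d n) = inner (xseq u d (n + 1)) (xseq u d (n + 1))"
      using inner_xseq_Suc[of u d j, OF u_inner d_pos] i ij by (simp add: enat one_enat_def)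
    show ?thesis
      unfolding inner_diff_consecutive[OF step_m step_n]
      using inner_xseq_cross[of u d, OF u_inner d_pos d_rec i ij]
      by (simp add: m enat one_enat_def inner_commute)
  qed
qed

end
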